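(* Let $F\colon S^2\to S^2$ be a Thurston map of degree $d$, and let $\theta_0\in\mathbb{R}$. Suppose there is a continuous surjection $\tilde\gamma\colon S^1\to S^2$ such that $F\circ\tilde\gamma=\tilde\gamma\circ\tilde\varphi$ on $S^1$, where $\tilde\varphi(z)=e^{2\pi i\theta_0}z^d$. Then there is a continuous surjection $\gamma\colon S^1\to S^2$ with $F(\gamma(z))=\gamma(z^d)$ for all $z\in S^1$.
   Context: $S^1=\{z\in\mathbb{C}:|z|=1\}$. A Thurston map is an orientation-preserving postcritically finite branched covering of $S^2$ whose postcritical set has at least $3$ points; in particular its degree satisfies $d\ge2$. *)

theory Defs
  imports "HOL-Complex_Analysis.Complex_Analysis"
begin

definition S1 :: "complex set" where "S1 = sphere 0 1"
definition S2 :: "(complex \<times> real) set" where "S2 = sphere 0 1"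

text \<open>Inverse stereographic projections; they form an oriented (holomorphic) atlas,
  the transition map being z maps to 1/z.\<close>
definition invN :: "complex \<Rightarrow> complex \<times> real" where
  "invN z = (2 * z / complex_of_real (1 + (cmod z)^2), ((cmod z)^2 - 1) / (1 + (cmod z)^2))"
definition invS :: "complex \<Rightarrow> complex \<times> real" where
  "invS z = (2 * cnj z / complex_of_real (1 + (cmod z)^2), (1 - (cmod z)^2) / (1 + (cmod z)^2))"

definition orient_pres :: "(complex \<Rightarrow> complex) \<Rightarrow> complex set \<Rightarrow> bool" where
  "orient_pres h W \<longleftrightarrow> open W \<and> continuous_on W h \<and> inj_on h W \<and>
     (\<forall>z\<in>W. \<exists>e>0. cball z e \<subseteq> W \<and>
        (\<forall>r. 0 < r \<and> r < e \<longrightarrow> winding_number (h \<circ> circlepath z r) (h z) = 1))"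

definition oriented_chart :: "(complex \<times> real) set \<Rightarrow> (complex \<times> real \<Rightarrow> complex) \<Rightarrow> bool" where
  "oriented_chart U \<phi> \<longleftrightarrow> openin (top_of_set S2) U \<and> continuous_on U \<phi> \<and> inj_on \<phi> U \<and>
     open (\<phi> ` U) \<and> continuous_on (\<phi> ` U) (inv_into U \<phi>) \<and>
     orient_pres (\<phi> \<circ> invN) {z. invN z \<in> U} \<and> orient_pres (\<phi> \<circ> invS) {z. invS z \<in> U}"

definition has_local_degree :: "(complex \<times> real \<Rightarrow> complex \<times> real) \<Rightarrow> complex \<times> real \<Rightarrow> nat \<Rightarrow> bool" where
  "has_local_degree F p k \<longleftrightarrow> k \<ge> 1 \<and> (\<exists>U V \<phi> \<psi>. p \<in> U \<and> F p \<in> V \<and>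
     oriented_chart U \<phi> \<and> oriented_chart V \<psi> \<and> \<phi> p = 0 \<and> \<psi> (F p) = 0 \<and> F ` U = V \<and>
     (\<forall>x\<in>U. \<psi> (F x) = (\<phi> x) ^ k))"

definition local_degree :: "(complex \<times> real \<Rightarrow> complex \<times> real) \<Rightarrow> complex \<times> real \<Rightarrow> nat" where
  "local_degree F p = (THE k. has_local_degree F p k)"

definition branched_cover :: "(complex \<times> real \<Rightarrow> complex \<times> real) \<Rightarrow> bool" where
  "branched_cover F \<longleftrightarrow> F ` S2 = S2 \<and> (\<forall>p\<in>S2. \<exists>k. has_local_degree F p k)"

definition crit :: "(complex \<times> real \<Rightarrow> complex \<times> real) \<Rightarrow> (complex \<times> real) set" where
  "crit F = {p \<in> S2. local_degree F p \<ge> 2}"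

definition post :: "(complex \<times> real \<Rightarrow> complex \<times> real) \<Rightarrow> (complex \<times> real) set" where
  "post F = (\<Union>n\<in>{1..}. (F ^^ n) ` crit F)"

definition thurston_map :: "(complex \<times> real \<Rightarrow> complex \<times> real) \<Rightarrow> nat \<Rightarrow> bool" where
  "thurston_map F d \<longleftrightarrow> branched_cover F \<and>
     (\<forall>q\<in>S2. finite {p \<in> S2. F p = q} \<and> (\<Sum>p\<in>{p \<in> S2. F p = q}. local_degree F p) = d) \<and>
     finite (post F) \<and> card (post F) \<ge> 3"

end

theory Submission
  imports Defs
begin

text \<open>Conjugating by a rotation \<open>z \<mapsto> b z\<close> turns \<open>z \<mapsto> c z\<^sup>d\<close> into \<open>z \<mapsto> z\<^sup>d\<close> as soon as
  \<open>c b\<^sup>d = b\<close>, i.e. \<open>b\<close> is a \<open>(d - 1)\<close>-st root of \<open>c\<inverse>\<close>; such a root exists on the circle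
  whenever \<open>d \<noteq> 1\<close>, and a Thurston map has degree at least 2.\<close>

lemma thurston_map_degree_ge_2:
  assumes "thurston_map F d"
  shows "d \<ge> 2"
proof (rule ccontr)
  assume "\<not> d \<ge> 2"
  have cover: "branched_cover F"
    and fibres: "\<forall>q\<in>S2. finite {p \<in> S2. F p = q} \<and> (\<Sum>p\<in>{p \<in> S2. F p = q}. local_degree F p) = d"
    and "card (post F) \<ge> 3"
    using assms unfolding thurston_map_def by auto
  have "crit F = {}"
  proof (rule ccontr)
    assume "crit F \<noteq> {}"
    then obtain p where p: "p \<in> S2" "local_degree F p \<ge> 2" unfolding crit_def by auto
    have "F p \<in> S2" using cover p(1) unfolding branched_cover_def by auto
    then have "finite {x \<in> S2. F x = F p}"
      and "(\<Sum>x\<in>{x \<in> S2. F x = F p}. local_degree F x) = d"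
      using fibres by auto
    then have "local_degree F p \<le> d"
      using p(1) member_le_sum[of p "{x \<in> S2. F x = F p}" "local_degree F"] by auto
    with p(2) \<open>\<not> d \<ge> 2\<close> show False by simp
  qed
  then have "post F = {}" unfolding post_def by simp
  with \<open>card (post F) \<ge> 3\<close> show False by simp
qed

lemma unit_circle_root_of_rotation:
  assumes "d \<noteq> 1"
  shows "\<exists>b. cmod b = 1 \<and> exp (\<i> * of_real t) * b ^ d = b"
proof (cases "d = 0")
  case True
  then show ?thesis by (intro exI[of _ "exp (\<i> * of_real t)"]) (simp add: norm_exp)
next
  case False
  with assms obtain m where d: "d = Suc m" and "m \<noteq> 0" by (cases d) auto
  define b where "b = exp (- (\<i> * of_real t) / of_nat m)"
  have "b ^ m = exp (- (\<i> * of_real t))"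
    unfolding b_def exp_of_nat_mult[symmetric] using \<open>m \<noteq> 0\<close> by simp
  then have "exp (\<i> * of_real t) * b ^ d = b"
    by (simp add: d exp_minus field_simps)
  moreover have "cmod b = 1" unfolding b_def by (simp add: norm_exp)
  ultimately show ?thesis by blast
qed

lemma rotation_image_S1:
  assumes "cmod b = 1"
  shows "(\<lambda>z. b * z) ` S1 = S1"
proof
  show "(\<lambda>z. b * z) ` S1 \<subseteq> S1" using assms by (auto simp: S1_def norm_mult)
  show "S1 \<subseteq> (\<lambda>z. b * z) ` S1"
  proof
    fix w assume "w \<in> S1"
    then have "w / b \<in> S1" using assms by (simp add: S1_def norm_divide)
    moreover have "w = b * (w / b)" using assms by auto
    ultimately show "w \<in> (\<lambda>z. b * z) ` S1" by blast
  qed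
qed

lemma semiconjugacy_rotate:
  fixes \<gamma> :: "complex \<Rightarrow> 'a::topological_space"
  assumes "cmod b = 1" and "c * b ^ d = b"
    and "continuous_on S1 \<gamma>"
    and "\<forall>z\<in>S1. F (\<gamma> z) = \<gamma> (c * z ^ d)"
  shows "continuous_on S1 (\<lambda>z. \<gamma> (b * z))"
    and "(\<lambda>z. \<gamma> (b * z)) ` S1 = \<gamma> ` S1"
    and "\<forall>z\<in>S1. F (\<gamma> (b * z)) = \<gamma> (b * z ^ d)"
proof -
  note rot = rotation_image_S1[OF assms(1)]
  show "continuous_on S1 (\<lambda>z. \<gamma> (b * z))"
    by (rule continuous_on_compose2[OF assms(3)]) (use rot in \<open>auto intro!: continuous_intros\<close>)
  show "(\<lambda>z. \<gamma> (b * z)) ` S1 = \<gamma> ` S1"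
    using rot by (metis image_image)
  show "\<forall>z\<in>S1. F (\<gamma> (b * z)) = \<gamma> (b * z ^ d)"
  proof
    fix z assume "z \<in> S1"
    then have "F (\<gamma> (b * z)) = \<gamma> (c * (b * z) ^ d)" using rot assms(4) by blast
    also have "c * (b * z) ^ d = b * z ^ d"
      using assms(2) by (simp add: power_mult_distrib)
    finally show "F (\<gamma> (b * z)) = \<gamma> (b * z ^ d)" .
  qed
qed

theorem lemma4p1:
  fixes F :: "complex \<times> real \<Rightarrow> complex \<times> real" and d :: nat and \<theta>0 :: real
    and \<gamma>t :: "complex \<Rightarrow> complex \<times> real"
  assumes "thurston_map F d"
    and "continuous_on S1 \<gamma>t" and "\<gamma>t ` S1 = S2"
    and "\<forall>z\<in>S1. F (\<gamma>t z) = \<gamma>t (exp (2 * pi * \<i> * complex_of_real \<theta>0) * z ^ d)"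
  shows "\<exists>\<gamma>. continuous_on S1 \<gamma> \<and> \<gamma> ` S1 = S2 \<and> (\<forall>z\<in>S1. F (\<gamma> z) = \<gamma> (z ^ d))"
proof -
  have "d \<noteq> 1" using thurston_map_degree_ge_2[OF assms(1)] by simp
  then obtain b where b: "cmod b = 1" "exp (\<i> * of_real (2 * pi * \<theta>0)) * b ^ d = b"
    using unit_circle_root_of_rotation by blast
  have "exp (2 * pi * \<i> * complex_of_real \<theta>0) = exp (\<i> * of_real (2 * pi * \<theta>0))"
    by (simp add: mult_ac)
  note semi = semiconjugacy_rotate[OF b assms(2) assms(4)[unfolded this]]
  show ?thesis
    by (intro exI[of _ "\<lambda>z. \<gamma>t (b * z)"]) (use semi assms(3) in auto)
qed

end
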